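(* Let $\mu$ be a distribution on $\mathbb{R}$ with finite second moment and a log-concave density $\varphi$, let $X$ have distribution $\mu$, and let $I$ be the closed interval $\overline{\{\varphi>0\}}$ with endpoints $a<b$, $a,b\in\overline{\mathbb{R}}$. Define on $I$ $$\mathcal{G}(x)=\mathbb{E}\big(|X-a|^2\wedge|X-b|^2\wedge|X-x|^2\big),$$ where a term involving an infinite endpoint is omitted. Let $F_\mu(y)=\mu((-\infty,y])$ and $K_\mu(y)=\int_{(-\infty,y]}\xi\,\mu(d\xi)$, with the conventions $(\pm\infty+x)/2=\pm\infty$ and $F_\mu,K_\mu$ extended at $\pm\infty$ by their limits, and set $$\Phi(x)=\frac{K_\mu\big(\frac{b+x}2\big)-K_\mu\big(\frac{a+x}2\big)}{F_\mu\big(\frac{b+x}2\big)-F_\mu\big(\frac{a+x}2\big)},\quad x\in I.$$ (a) $\mathcal{G}$ is differentiable on $I$ with $\mathcal{G}'(x)=2\int_{\frac{a+x}2}^{\frac{x+b}2}(x-\xi)\,\mu(d\xi)$, and $\operatorname{argmin}_I\mathcal{G}$ consists of a single point $x^*$, which is the unique stationary point of $\mathcal{G}$ on $I$ and satisfies $x^*=\Phi(x^* )$. (b) For every $x_0\in I$, the sequence defined by $x_{n+1}=\Phi(x_n)$, $n\ge0$, converges to $x^*$.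
   Context: Log-concave means $\log\varphi$ is concave (value $-\infty$ allowed where $\varphi=0$). *)

theory Defs
  imports "HOL-Analysis.Analysis"
begin

text \<open>Log-concavity: log phi is concave (with value -infinity where phi = 0),
  written out multiplicatively.\<close>
definition log_concave :: "(real \<Rightarrow> real) \<Rightarrow> bool" where
  "log_concave \<phi> \<longleftrightarrow> (\<forall>x. 0 \<le> \<phi> x) \<and>
     (\<forall>x y t. 0 < t \<and> t < 1 \<longrightarrow>
        \<phi> x powr (1 - t) * \<phi> y powr t \<le> \<phi> ((1 - t) * x + t * y))"

text \<open>Squared distance to an endpoint; infinite for an infinite endpoint
  (so that the corresponding term drops out of the minimum).\<close>
definition sqd_end :: "ereal \<Rightarrow> real \<Rightarrow> ereal" where
  "sqd_end e \<xi> = (if \<bar>e\<bar> = \<infinity> then \<infinity> else ereal ((\<xi> - real_of_ereal e)\<^sup>2))"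

definition calG :: "real measure \<Rightarrow> ereal \<Rightarrow> ereal \<Rightarrow> real \<Rightarrow> real" where
  "calG \<mu> a b x = (\<integral>\<xi>. real_of_ereal
      (min (min (sqd_end a \<xi>) (sqd_end b \<xi>)) (ereal ((\<xi> - x)\<^sup>2))) \<partial>\<mu>)"

definition Fext :: "real measure \<Rightarrow> ereal \<Rightarrow> real" where
  "Fext \<mu> y = (if y = -\<infinity> then 0 else if y = \<infinity> then 1
                else measure \<mu> {..real_of_ereal y})"

definition Kext :: "real measure \<Rightarrow> ereal \<Rightarrow> real" where
  "Kext \<mu> y = (if y = -\<infinity> then 0 else if y = \<infinity> then (\<integral>\<xi>. \<xi> \<partial>\<mu>)
                else (LINT \<xi>:{..real_of_ereal y}|\<mu>. \<xi>))"

definition Phi :: "real measure \<Rightarrow> ereal \<Rightarrow> ereal \<Rightarrow> real \<Rightarrow> real" where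
  "Phi \<mu> a b x =
     (Kext \<mu> ((b + ereal x) / 2) - Kext \<mu> ((a + ereal x) / 2)) /
     (Fext \<mu> ((b + ereal x) / 2) - Fext \<mu> ((a + ereal x) / 2))"

end

theory Submission
  imports Defs
begin

text \<open>On the window of points \<open>\<xi>\<close> that are closer to \<open>x\<close> than to the endpoints of \<open>I\<close>,
  the integrand of \<open>calG\<close> is \<open>(\<xi> - x)\<^sup>2\<close>, and the window moves continuously with \<open>x\<close>;
  hence \<open>calG' x = 2 \<mu>(window x) (x - Phi x)\<close>, where \<open>Phi x\<close> is the mean of \<open>\<mu>\<close> on the
  window. Moving \<open>x\<close> by \<open>2t\<close> translates the window by \<open>t\<close>; since the density has a monotone
  likelihood ratio under translation, the mean moves monotonically and by at most \<open>t\<close>. So \<open>Phi\<close>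
  is a \<open>1/2\<close>-contraction of the closed interval \<open>I\<close>: Banach's theorem gives the fixed point
  \<open>x\<^sup>*\<close> and the convergence of the iteration, and as \<open>x - Phi x\<close> is strictly increasing,
  \<open>calG'\<close> is negative left of \<open>x\<^sup>*\<close> and positive right of it.\<close>

section \<open>Log-concave functions\<close>

lemma log_concave_nonneg: "log_concave \<phi> \<Longrightarrow> 0 \<le> \<phi> x"
  by (simp add: log_concave_def)

lemma log_concave_pos_between:
  assumes lc: "log_concave \<phi>" and "0 < \<phi> p" "0 < \<phi> q" "p < t" "t < q"
  shows "0 < \<phi> t"
proof -
  define l where "l = (t - p) / (q - p)"
  have l: "0 < l" "l < 1"
    using assms by (auto simp: l_def field_simps)
  have "l * (q - p) = t - p"
    using assms by (simp add: l_def)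
  then have t: "(1 - l) * p + l * q = t"
    by (simp add: algebra_simps)
  have "0 < \<phi> p powr (1 - l) * \<phi> q powr l"
    using assms by simp
  also have "\<dots> \<le> \<phi> t"
    using lc l t unfolding log_concave_def by blast
  finally show ?thesis .
qed

text \<open>The likelihood ratio \<open>\<phi>(\<cdot> + s) / \<phi>\<close> of a log-concave function is nonincreasing: both
  \<open>u\<close> and \<open>v + s\<close> are convex combinations of \<open>v\<close> and \<open>u + s\<close> with complementary weights.\<close>
lemma log_concave_shift_ratio_antimono:
  assumes lc: "log_concave \<phi>" and "v < u" "0 < s"
  shows "\<phi> v * \<phi> (u + s) \<le> \<phi> u * \<phi> (v + s)"
proof -
  define l where "l = (u - v) / (u - v + s)"
  have l: "0 < l" "l < 1" "0 < 1 - l" "1 - l < 1"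
    using assms by (auto simp: l_def field_simps)
  have "l * (u - v + s) = u - v"
    using assms by (simp add: l_def)
  then have u: "(1 - l) * v + l * (u + s) = u" and vs: "(1 - (1 - l)) * v + (1 - l) * (u + s) = v + s"
    by (simp_all add: algebra_simps)
  have mid: "\<And>t x y. 0 < t \<Longrightarrow> t < 1 \<Longrightarrow> \<phi> x powr (1 - t) * \<phi> y powr t \<le> \<phi> ((1 - t) * x + t * y)"
    using lc unfolding log_concave_def by blast
  have nonneg: "0 \<le> \<phi> x" for x
    using lc by (rule log_concave_nonneg)
  have "\<phi> v * \<phi> (u + s) =
      (\<phi> v powr (1 - l) * \<phi> (u + s) powr l) * (\<phi> v powr (1 - (1 - l)) * \<phi> (u + s) powr (1 - l))"
    by (simp add: nonneg powr_add[symmetric] mult_ac)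
  also have "\<dots> \<le> \<phi> u * \<phi> (v + s)"
  proof (rule mult_mono)
    show "\<phi> v powr (1 - l) * \<phi> (u + s) powr l \<le> \<phi> u"
      using mid[OF l(1,2), of v "u + s"] by (simp only: u)
    show "\<phi> v powr (1 - (1 - l)) * \<phi> (u + s) powr (1 - l) \<le> \<phi> (v + s)"
      using mid[OF l(3,4), of v "u + s"] by (simp only: vs)
  qed (simp_all add: nonneg)
  finally show ?thesis .
qed

lemma log_concave_shift_ratio_sign:
  assumes lc: "log_concave \<phi>" and s: "0 < s"
  shows "(u - m) * (\<phi> m * \<phi> (u + s) - \<phi> (m + s) * \<phi> u) \<le> 0"
proof (cases u m rule: linorder_cases)
  case less
  then show ?thesis
    using log_concave_shift_ratio_antimono[OF lc less s] by (simp add: mult_nonpos_nonneg mult.commute)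
next
  case greater
  then show ?thesis
    using log_concave_shift_ratio_antimono[OF lc greater s] by (simp add: mult_nonneg_nonpos mult.commute)
qed simp

lemma emeasure_density_interval_pos:
  fixes \<phi> :: "real \<Rightarrow> real"
  assumes [measurable]: "\<phi> \<in> borel_measurable borel" and "p < q" and pos: "\<And>x. p \<le> x \<Longrightarrow> x \<le> q \<Longrightarrow> 0 < \<phi> x"
  shows "emeasure (density lborel (\<lambda>x. ennreal (\<phi> x))) {p..q} \<noteq> 0"
proof
  assume "emeasure (density lborel (\<lambda>x. ennreal (\<phi> x))) {p..q} = 0"
  then have "AE x in lborel. ennreal (\<phi> x) * indicator {p..q} x = 0"
    by (simp add: emeasure_density nn_integral_0_iff_AE)
  then have "AE x in lborel. x \<notin> {p..q}"
    by (rule eventually_mono) (use pos in \<open>force split: split_indicator\<close>)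
  then have "{p..q} \<in> null_sets lborel"
    by (subst AE_iff_null_sets) auto
  then have "emeasure lborel {p..q} = 0"
    by auto
  with \<open>p < q\<close> show False
    by simp
qed

lemma sq_dist_le_iff:
  fixes \<xi> x r :: real
  shows "(\<xi> - x)\<^sup>2 \<le> (\<xi> - r)\<^sup>2 \<longleftrightarrow> 0 \<le> (x - r) * (2 * \<xi> - x - r)"
proof -
  have "(\<xi> - r)\<^sup>2 - (\<xi> - x)\<^sup>2 = (x - r) * (2 * \<xi> - x - r)"
    by (simp add: power2_eq_square algebra_simps)
  then show ?thesis
    by linarith
qed

lemma islimpt_is_interval:
  fixes S :: "real set"
  assumes S: "is_interval S" and "y \<in> S" "z \<in> S" "z \<noteq> y"
  shows "y islimpt S"
proof -
  define p q where "p = min y z" and "q = max y z"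
  have p: "p \<in> S" and q: "q \<in> S" and "p < q" "y \<in> {p..q}"
    using assms by (auto simp: p_def q_def min_def max_def)
  have "{p..q} \<subseteq> S"
  proof
    fix x assume "x \<in> {p..q}"
    then show "x \<in> S"
      using mem_is_interval_1_I[OF S p q] by simp
  qed
  moreover have "y islimpt {p..q}"
    using \<open>p < q\<close> \<open>y \<in> {p..q}\<close> by simp
  ultimately show ?thesis
    by (rule islimpt_subset[rotated])
qed

text \<open>Applied at \<open>x\<close> and at \<open>y\<close>, the bound traps the difference quotient between
  \<open>D y - \<bar>y - x\<bar>\<close> and \<open>D x + \<bar>y - x\<bar>\<close>.\<close>
lemma has_real_derivative_if_quadratic_bound:
  fixes G D :: "real \<Rightarrow> real"
  assumes bound: "\<And>x y. x \<in> S \<Longrightarrow> y \<in> S \<Longrightarrow> G y - G x \<le> (y - x) * D x + (y - x)\<^sup>2"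
    and cont: "(D \<longlongrightarrow> D x) (at x within S)" and x: "x \<in> S"
  shows "(G has_real_derivative D x) (at x within S)"
  unfolding has_field_derivative_iff
proof -
  have "\<bar>(G y - G x) / (y - x) - D x\<bar> \<le> \<bar>D y - D x\<bar> + \<bar>y - x\<bar>" if "y \<in> S" "y \<noteq> x" for y
  proof -
    have upper: "(G y - G x) / (y - x) \<le> D x + (y - x)" if "x < y" "x \<in> S" "y \<in> S" for x y
    proof -
      have "G y - G x \<le> (D x + (y - x)) * (y - x)"
        using bound[OF that(2,3)] by (simp add: power2_eq_square algebra_simps)
      then show ?thesis
        using that(1) by (simp add: pos_divide_le_eq)
    qed
    have lower: "D y - (y - x) \<le> (G y - G x) / (y - x)" if "x < y" "x \<in> S" "y \<in> S" for x y
    proof -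
      have "(D y - (y - x)) * (y - x) \<le> G y - G x"
        using bound[OF that(3,2)] by (simp add: power2_eq_square algebra_simps)
      then show ?thesis
        using that(1) by (simp add: pos_le_divide_eq)
    qed
    have swap: "(G y - G x) / (y - x) = (G x - G y) / (x - y)"
      by (simp add: divide_simps) (simp add: algebra_simps)
    show ?thesis
      using that x upper[of x y] lower[of x y] upper[of y x] lower[of y x]
      by (cases "x < y") (auto simp: abs_if swap)
  qed
  then have "eventually (\<lambda>y. norm ((G y - G x) / (y - x) - D x) \<le> \<bar>D y - D x\<bar> + \<bar>y - x\<bar>) (at x within S)"
    by (auto simp: eventually_at_filter)
  moreover have "((\<lambda>y. \<bar>D y - D x\<bar> + \<bar>y - x\<bar>) \<longlongrightarrow> 0) (at x within S)"
  proof -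
    have "((\<lambda>y. \<bar>D y - D x\<bar> + \<bar>y - x\<bar>) \<longlongrightarrow> \<bar>D x - D x\<bar> + \<bar>x - x\<bar>) (at x within S)"
      by (intro tendsto_intros cont)
    then show ?thesis
      by simp
  qed
  ultimately have "((\<lambda>y. (G y - G x) / (y - x) - D x) \<longlongrightarrow> 0) (at x within S)"
    by (rule Lim_null_comparison)
  then show "((\<lambda>y. (G y - G x) / (y - x)) \<longlongrightarrow> D x) (at x within S)"
    by (simp add: LIM_zero_iff)
qed

lemma strict_min_if_deriv_sign:
  fixes G D :: "real \<Rightarrow> real"
  assumes S: "is_interval S" and x0: "x0 \<in> S"
    and deriv: "\<And>x. x \<in> S \<Longrightarrow> (G has_real_derivative D x) (at x within S)"
    and neg: "\<And>x. x \<in> S \<Longrightarrow> x < x0 \<Longrightarrow> D x < 0"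
    and pos: "\<And>x. x \<in> S \<Longrightarrow> x0 < x \<Longrightarrow> 0 < D x"
    and y: "y \<in> S" "y \<noteq> x0"
  shows "G x0 < G y"
proof -
  have segment: "{p..q} \<subseteq> S" if "p \<in> S" "q \<in> S" for p q
  proof
    fix x assume "x \<in> {p..q}"
    then show "x \<in> S"
      using mem_is_interval_1_I[OF S that] by simp
  qed
  have mvt: "\<exists>z\<in>{p<..<q}. G q - G p = D z * (q - p)" if "p \<in> S" "q \<in> S" "p < q" for p q
  proof (rule mvt_simple[OF \<open>p < q\<close>])
    fix z assume "p \<le> z" "z \<le> q"
    then have "z \<in> S"
      using segment[OF that(1,2)] by auto
    then have "(G has_derivative (*) (D z)) (at z within S)"
      using deriv unfolding has_field_derivative_def by blast
    then show "(G has_derivative (*) (D z)) (at z within {p..q})"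
      using segment[OF that(1,2)] by (rule has_derivative_subset)
  qed
  show ?thesis
  proof (cases "x0 < y")
    case True
    then obtain z where z: "z \<in> {x0<..<y}" "G y - G x0 = D z * (y - x0)"
      using mvt[OF x0 y(1)] by blast
    have "z \<in> S"
      using z(1) segment[OF x0 y(1)] by auto
    with z(1) have "0 < D z"
      by (intro pos) auto
    with True have "0 < D z * (y - x0)"
      by simp
    with z(2) show ?thesis
      by simp
  next
    case False
    then have "y < x0"
      using y(2) by simp
    then obtain z where z: "z \<in> {y<..<x0}" "G x0 - G y = D z * (x0 - y)"
      using mvt[OF y(1) x0] by blast
    have "z \<in> S"
      using z(1) segment[OF y(1) x0] by auto
    with z(1) have "D z < 0"
      by (intro neg) auto
    with \<open>y < x0\<close> have "D z * (x0 - y) < 0"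
      by (simp add: mult_neg_pos)
    with z(2) show ?thesis
      by simp
  qed
qed

lemma contraction_iterates_tendsto:
  fixes f :: "'a::metric_space \<Rightarrow> 'a"
  assumes f: "f ` S \<subseteq> S" and c: "0 \<le> c" "c < 1"
    and lip: "\<And>x y. x \<in> S \<Longrightarrow> y \<in> S \<Longrightarrow> dist (f x) (f y) \<le> c * dist x y"
    and z: "z \<in> S" "f z = z" and x: "x \<in> S"
  shows "(\<lambda>n. (f ^^ n) x) \<longlonglongrightarrow> z"
proof -
  have iter: "(f ^^ n) x \<in> S \<and> dist ((f ^^ n) x) z \<le> c ^ n * dist x z" for n
  proof (induction n)
    case 0
    show ?case
      using x by simp
  next
    case (Suc n)
    then have xn: "(f ^^ n) x \<in> S" and IH: "dist ((f ^^ n) x) z \<le> c ^ n * dist x z"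
      by simp_all
    have "dist ((f ^^ Suc n) x) z = dist (f ((f ^^ n) x)) (f z)"
      using z(2) by simp
    also have "\<dots> \<le> c * dist ((f ^^ n) x) z"
      using xn z(1) by (rule lip)
    also have "\<dots> \<le> c * (c ^ n * dist x z)"
      using IH c(1) by (rule mult_left_mono)
    finally have "dist ((f ^^ Suc n) x) z \<le> c ^ Suc n * dist x z"
      by (simp add: mult.assoc)
    moreover have "(f ^^ Suc n) x \<in> S"
      using xn f by (auto simp: image_subset_iff)
    ultimately show ?case
      by simp
  qed
  have "(\<lambda>n. c ^ n * dist x z) \<longlonglongrightarrow> 0"
    using c by (intro tendsto_mult_left_zero LIMSEQ_power_zero) simp
  then have "(\<lambda>n. dist ((f ^^ n) x) z) \<longlonglongrightarrow> 0"
  proof (rule Lim_null_comparison[rotated])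
    show "\<forall>\<^sub>F n in sequentially. norm (dist ((f ^^ n) x) z) \<le> c ^ n * dist x z"
      using iter by (intro always_eventually) simp
  qed
  then show ?thesis
    by (rule tendsto_dist_iff[THEN iffD2])
qed

section \<open>Conditional means\<close>

lemma mediant_ge:
  fixes m n s t k :: real
  assumes "0 < m" "0 \<le> n" "s \<le> m * k" "n * k \<le> t"
  shows "s / m \<le> (s + t) / (m + n)"
proof -
  have "s * n \<le> m * k * n" and "n * k * m \<le> t * m"
    using assms by (simp_all add: mult_right_mono)
  then have "s * (m + n) \<le> (s + t) * m"
    by (simp add: algebra_simps)
  with assms(1,2) show ?thesis
    by (simp add: divide_simps)
qed

lemma mediant_le:
  fixes m n s t k :: real
  assumes "0 < m" "0 \<le> n" "m * k \<le> s" "t \<le> n * k"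
  shows "(s + t) / (m + n) \<le> s / m"
proof -
  have "m * k * n \<le> s * n" and "t * m \<le> n * k * m"
    using assms by (simp_all add: mult_right_mono)
  then have "(s + t) * m \<le> s * (m + n)"
    by (simp add: algebra_simps)
  with assms(1,2) show ?thesis
    by (simp add: divide_simps)
qed

definition cond_mean :: "real measure \<Rightarrow> real set \<Rightarrow> real" where
  "cond_mean M S = (LINT \<xi>:S|M. \<xi>) / measure M S"

locale finite_mean_measure = finite_measure M for M :: "real measure" +
  assumes sets_eq_borel [measurable_cong]: "sets M = sets borel"
    and integrable_id: "integrable M (\<lambda>x. x)"
begin

lemma set_integrable_id: "S \<in> sets borel \<Longrightarrow> set_integrable M S (\<lambda>x. x)"
  unfolding set_integrable_def using integrable_mult_indicator[OF _ integrable_id, of S] by simp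

lemma set_integrable_const_real: "S \<in> sets borel \<Longrightarrow> set_integrable M S (\<lambda>_. c :: real)"
  unfolding set_integrable_def using integrable_mult_indicator[OF _ integrable_const, of S c] by simp

lemma set_integral_const_real: "S \<in> sets borel \<Longrightarrow> (LINT \<xi>:S|M. c) = measure M S * c"
  by (simp add: set_integral_const)

lemma set_integral_id_minus_const:
  assumes S: "S \<in> sets borel" and pos: "0 < measure M S"
  shows "(LINT \<xi>:S|M. \<xi> - c) = measure M S * (cond_mean M S - c)"
proof -
  have "(LINT \<xi>:S|M. \<xi> - c) = (LINT \<xi>:S|M. \<xi>) - (LINT \<xi>:S|M. c)"
    using set_integrable_id[OF S] set_integrable_const_real[OF S] by (rule set_integral_diff)
  also have "\<dots> = measure M S * cond_mean M S - measure M S * c"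
    using pos by (simp add: set_integral_const_real[OF S] cond_mean_def)
  finally show ?thesis
    by (simp add: right_diff_distrib)
qed

lemma set_integral_id_le:
  assumes S: "S \<in> sets borel" and le: "\<And>\<xi>. \<xi> \<in> S \<Longrightarrow> \<xi> \<le> k"
  shows "(LINT \<xi>:S|M. \<xi>) \<le> measure M S * k"
proof -
  have "(LINT \<xi>:S|M. \<xi>) \<le> (LINT \<xi>:S|M. k)"
    using set_integrable_id[OF S] set_integrable_const_real[OF S] le by (rule set_integral_mono)
  then show ?thesis
    by (simp only: set_integral_const_real[OF S])
qed

lemma set_integral_id_ge:
  assumes S: "S \<in> sets borel" and ge: "\<And>\<xi>. \<xi> \<in> S \<Longrightarrow> k \<le> \<xi>"
  shows "measure M S * k \<le> (LINT \<xi>:S|M. \<xi>)"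
proof -
  have "(LINT \<xi>:S|M. k) \<le> (LINT \<xi>:S|M. \<xi>)"
    using set_integrable_const_real[OF S] set_integrable_id[OF S] ge by (rule set_integral_mono)
  then show ?thesis
    by (simp only: set_integral_const_real[OF S])
qed

lemma set_integral_pos:
  fixes f :: "real \<Rightarrow> real"
  assumes S: "S \<in> sets borel" and pos: "0 < measure M S"
    and f: "set_integrable M S f" and f_pos: "\<And>\<xi>. \<xi> \<in> S \<Longrightarrow> 0 < f \<xi>"
  shows "0 < (LINT \<xi>:S|M. f \<xi>)"
proof -
  have "integral\<^sup>L M (\<lambda>_. 0) < integral\<^sup>L M (\<lambda>\<xi>. indicator S \<xi> * f \<xi>)"
  proof (rule integral_less_AE)
    show "integrable M (\<lambda>\<xi>. indicator S \<xi> * f \<xi>)"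
      using f by (simp add: set_integrable_def)
    show "emeasure M S \<noteq> 0"
    proof
      assume "emeasure M S = 0"
      then have "measure M S = 0"
        by (simp add: measure_def)
      with pos show False
        by simp
    qed
    show "AE \<xi> in M. \<xi> \<in> S \<longrightarrow> 0 \<noteq> indicator S \<xi> * f \<xi>"
      using f_pos by (intro AE_I2) (simp add: less_imp_neq)
    show "AE \<xi> in M. 0 \<le> indicator S \<xi> * f \<xi>"
      using f_pos by (intro AE_I2) (simp add: indicator_def less_imp_le)
  qed (use S in auto)
  then show ?thesis
    by (simp add: set_lebesgue_integral_def)
qed

lemma cond_mean_mem:
  assumes S: "S \<in> sets borel" "is_interval S" and pos: "0 < measure M S"
  shows "cond_mean M S \<in> S"
proof (rule ccontr)
  let ?m = "cond_mean M S"
  assume "?m \<notin> S"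
  with S(2) have side: "(\<forall>\<xi>\<in>S. ?m < \<xi>) \<or> (\<forall>\<xi>\<in>S. \<xi> < ?m)"
    unfolding is_interval_1 by (meson linorder_not_le)
  have centered: "(LINT \<xi>:S|M. \<xi> - ?m) = 0"
    using set_integral_id_minus_const[OF S(1) pos] by simp
  have int: "set_integrable M S (\<lambda>\<xi>. \<xi> - ?m)"
    using set_integrable_id[OF S(1)] set_integrable_const_real[OF S(1)] by (rule set_integral_diff)
  have int': "set_integrable M S (\<lambda>\<xi>. ?m - \<xi>)"
    using set_integrable_const_real[OF S(1)] set_integrable_id[OF S(1)] by (rule set_integral_diff)
  have centered': "(LINT \<xi>:S|M. ?m - \<xi>) = 0"
    using set_integrable_const_real[OF S(1)] set_integrable_id[OF S(1)] pos
    by (simp add: set_integral_diff(2) set_integral_const_real[OF S(1)] cond_mean_def)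
  from side show False
  proof
    assume "\<forall>\<xi>\<in>S. ?m < \<xi>"
    then have "0 < (LINT \<xi>:S|M. \<xi> - ?m)"
      by (intro set_integral_pos[OF S(1) pos int]) auto
    with centered show False
      by simp
  next
    assume "\<forall>\<xi>\<in>S. \<xi> < ?m"
    then have "0 < (LINT \<xi>:S|M. ?m - \<xi>)"
      by (intro set_integral_pos[OF S(1) pos int']) auto
    with centered' show False
      by simp
  qed
qed

lemma cond_mean_Un_Diff:
  assumes S: "S \<in> sets borel" and T: "T \<in> sets borel"
  shows "cond_mean M (S \<union> T) =
    ((LINT \<xi>:S|M. \<xi>) + (LINT \<xi>:T - S|M. \<xi>)) / (measure M S + measure M (T - S))"
proof -
  have TS: "T - S \<in> sets borel"
    using S T by auto
  have "(LINT \<xi>:S \<union> T|M. \<xi>) = (LINT \<xi>:S \<union> (T - S)|M. \<xi>)"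
    by (simp add: Un_Diff_cancel)
  also have "\<dots> = (LINT \<xi>:S|M. \<xi>) + (LINT \<xi>:T - S|M. \<xi>)"
    using S TS by (intro set_integral_Un set_integrable_id) auto
  finally show ?thesis
    using S T by (simp add: cond_mean_def finite_measure_Union')
qed

lemma cond_mean_le_Un:
  assumes S: "S \<in> sets borel" and T: "T \<in> sets borel" and pos: "0 < measure M S"
    and right: "\<And>s t. s \<in> S \<Longrightarrow> t \<in> T - S \<Longrightarrow> s \<le> t"
  shows "cond_mean M S \<le> cond_mean M (S \<union> T)"
proof (cases "T - S = {}")
  case True
  then show ?thesis
    by (simp add: Un_absorb2 Diff_eq_empty_iff)
next
  case False
  have "S \<noteq> {}"
    using pos by auto
  with False right obtain k where k: "\<And>s. s \<in> S \<Longrightarrow> s \<le> k" "\<And>t. t \<in> T - S \<Longrightarrow> k \<le> t"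
    by (metis all_not_in_conv bdd_aboveI cSup_least cSup_upper)
  have TS: "T - S \<in> sets borel"
    using S T by auto
  have "cond_mean M S \<le> ((LINT \<xi>:S|M. \<xi>) + (LINT \<xi>:T - S|M. \<xi>)) / (measure M S + measure M (T - S))"
    unfolding cond_mean_def
    using pos k by (intro mediant_ge set_integral_id_le set_integral_id_ge S TS) auto
  also have "\<dots> = cond_mean M (S \<union> T)"
    using cond_mean_Un_Diff[OF S T] by simp
  finally show ?thesis .
qed

lemma cond_mean_Un_le:
  assumes S: "S \<in> sets borel" and T: "T \<in> sets borel" and pos: "0 < measure M S"
    and left: "\<And>s t. s \<in> S \<Longrightarrow> t \<in> T - S \<Longrightarrow> t \<le> s"
  shows "cond_mean M (S \<union> T) \<le> cond_mean M S"
proof (cases "T - S = {}")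
  case True
  then show ?thesis
    by (simp add: Un_absorb2 Diff_eq_empty_iff)
next
  case False
  have "S \<noteq> {}"
    using pos by auto
  with False left obtain k where k: "\<And>s. s \<in> S \<Longrightarrow> k \<le> s" "\<And>t. t \<in> T - S \<Longrightarrow> t \<le> k"
    by (metis all_not_in_conv bdd_belowI cInf_greatest cInf_lower)
  have TS: "T - S \<in> sets borel"
    using S T by auto
  have "cond_mean M (S \<union> T) = ((LINT \<xi>:S|M. \<xi>) + (LINT \<xi>:T - S|M. \<xi>)) / (measure M S + measure M (T - S))"
    using cond_mean_Un_Diff[OF S T] by simp
  also have "\<dots> \<le> cond_mean M S"
    unfolding cond_mean_def
    using pos k by (intro mediant_le set_integral_id_le set_integral_id_ge S TS) auto
  finally show ?thesis .
qed

lemma cond_mean_eq_diff: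
  assumes [measurable]: "A \<in> sets borel" "B \<in> sets borel" "C \<in> sets borel"
    and disj: "B \<inter> C = {}" and AE: "AE \<xi> in M. \<xi> \<in> A \<longleftrightarrow> \<xi> \<in> B \<union> C"
  shows "cond_mean M C = ((LINT \<xi>:A|M. \<xi>) - (LINT \<xi>:B|M. \<xi>)) / (measure M A - measure M B)"
proof -
  have "measure M A = measure M (B \<union> C)"
    using AE by (rule measure_eq_AE) auto
  also have "\<dots> = measure M B + measure M C"
    using disj by (intro finite_measure_Union) auto
  finally have measure_eq: "measure M A - measure M B = measure M C"
    by simp
  have "(LINT \<xi>:A|M. \<xi>) = (LINT \<xi>:B \<union> C|M. \<xi>)"
    using AE by (intro set_integral_cong_set) (auto simp: set_borel_measurable_def)
  also have "\<dots> = (LINT \<xi>:B|M. \<xi>) + (LINT \<xi>:C|M. \<xi>)"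
    using disj by (intro set_integral_Un set_integrable_id) auto
  finally show ?thesis
    by (simp add: measure_eq cond_mean_def)
qed

end

section \<open>The windows of a log-concave distribution\<close>

locale log_concave_density =
  fixes \<mu> :: "real measure" and \<phi> :: "real \<Rightarrow> real" and a b :: ereal
  assumes phi_measurable [measurable]: "\<phi> \<in> borel_measurable borel"
    and log_concave: "log_concave \<phi>"
    and mu_eq: "\<mu> = density lborel (\<lambda>x. ennreal (\<phi> x))"
    and prob: "emeasure \<mu> (space \<mu>) = 1"
    and second_moment: "integrable \<mu> (\<lambda>x. x\<^sup>2)"
    and support: "closure {x. \<phi> x > 0} = {x. a \<le> ereal x \<and> ereal x \<le> b}"
    and a_less_b: "a < b"
begin

definition I :: "real set" where
  "I = {x. a \<le> ereal x \<and> ereal x \<le> b}"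

text \<open>\<open>\<xi> \<in> window x\<close> iff the mirror image \<open>2\<xi> - x\<close> of \<open>x\<close> in \<open>\<xi>\<close> lies in \<open>(a, b)\<close>, i.e.\ iff \<open>\<xi>\<close>
  lies strictly between the midpoints \<open>(a + x) / 2\<close> and \<open>(x + b) / 2\<close> (\<open>window_eq\<close>); these
  are the points strictly closer to \<open>x\<close> than to either endpoint.\<close>
definition window :: "real \<Rightarrow> real set" where
  "window x = {\<xi>. a < ereal (2 * \<xi> - x) \<and> ereal (2 * \<xi> - x) < b}"

lemma sets_mu [measurable_cong]: "sets \<mu> = sets borel"
  by (simp add: mu_eq)

lemma space_mu [simp]: "space \<mu> = UNIV"
  by (simp add: mu_eq)

lemma phi_nonneg: "0 \<le> \<phi> x"
  using log_concave by (rule log_concave_nonneg)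

lemma measure_mu_UNIV: "measure \<mu> UNIV = 1"
  using prob by (simp add: measure_def)

lemma a_neq_PInf: "a \<noteq> \<infinity>" and b_neq_MInf: "b \<noteq> -\<infinity>"
  using a_less_b by auto

sublocale finite_mean_measure \<mu>
proof (rule finite_mean_measure.intro)
  show fin: "finite_measure \<mu>"
    using prob by (intro finite_measureI) auto
  show "finite_mean_measure_axioms \<mu>"
  proof
    show "sets \<mu> = sets borel"
      by (fact sets_mu)
    show "integrable \<mu> (\<lambda>x. x)"
    proof (rule Bochner_Integration.integrable_bound)
      show "integrable \<mu> (\<lambda>x. 1 + x\<^sup>2)"
        using second_moment by (intro Bochner_Integration.integrable_add finite_measure.integrable_const[OF fin])
      have "\<bar>x\<bar> \<le> 1 + x\<^sup>2" for x :: real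
      proof -
        have "0 \<le> (\<bar>x\<bar> - 1)\<^sup>2"
          by simp
        then show ?thesis
          by (simp add: power2_eq_square algebra_simps abs_mult_self_eq)
      qed
      then show "AE x in \<mu>. norm x \<le> norm (1 + x\<^sup>2)"
        by simp
    qed simp
  qed
qed

lemma integrable_sq_shift: "integrable \<mu> (\<lambda>\<xi>. (\<xi> - y)\<^sup>2)"
proof -
  have "integrable \<mu> (\<lambda>\<xi>. \<xi>\<^sup>2 - 2 * y * \<xi> + y\<^sup>2)"
    using second_moment integrable_id by simp
  then show ?thesis
    by (simp add: power2_diff algebra_simps)
qed

lemma AE_mu_neq: "AE \<xi> in \<mu>. \<xi> \<noteq> r"
  unfolding mu_eq by (subst AE_density) (auto intro: eventually_mono[OF AE_lborel_singleton])

lemma phi_pos: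
  assumes "a < ereal t" "ereal t < b"
  shows "0 < \<phi> t"
proof -
  have cl: "closure {x. 0 < \<phi> x} = I"
    using support by (simp add: I_def)
  have "\<exists>p. 0 < \<phi> p \<and> p < t"
  proof (rule ccontr)
    assume "\<nexists>p. 0 < \<phi> p \<and> p < t"
    then have "closure {x. 0 < \<phi> x} \<subseteq> {t..}"
      by (intro closure_minimal) force+
    moreover obtain s where s: "a < ereal s" "ereal s < ereal t"
      using ereal_dense2[OF assms(1)] by auto
    moreover have "s \<in> I"
      using s assms(2) unfolding I_def by (metis less_imp_le mem_Collect_eq order.strict_trans)
    ultimately show False
      unfolding cl by auto
  qed
  moreover have "\<exists>q. 0 < \<phi> q \<and> t < q"
  proof (rule ccontr)
    assume "\<nexists>q. 0 < \<phi> q \<and> t < q"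
    then have "closure {x. 0 < \<phi> x} \<subseteq> {..t}"
      by (intro closure_minimal) force+
    moreover obtain s where s: "ereal t < ereal s" "ereal s < b"
      using ereal_dense2[OF assms(2)] by auto
    moreover have "s \<in> I"
      using s assms(1) unfolding I_def by (metis less_imp_le mem_Collect_eq order.strict_trans)
    ultimately show False
      unfolding cl by auto
  qed
  ultimately show ?thesis
    using log_concave_pos_between[OF log_concave] by blast
qed

lemma window_eq: "{\<xi>. (a + ereal x) / 2 < ereal \<xi> \<and> ereal \<xi> < (ereal x + b) / 2} = window x"
proof -
  have "(a + ereal x) / 2 < ereal \<xi> \<longleftrightarrow> a < ereal (2 * \<xi> - x)" for \<xi>
    using a_neq_PInf by (cases a) (auto simp: field_simps)
  moreover have "ereal \<xi> < (ereal x + b) / 2 \<longleftrightarrow> ereal (2 * \<xi> - x) < b" for \<xi>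
    using b_neq_MInf by (cases b) (auto simp: field_simps)
  ultimately show ?thesis
    unfolding window_def by auto
qed

lemma window_measurable [measurable]: "window x \<in> sets borel"
  unfolding window_def by measurable

lemma is_interval_window: "is_interval (window x)"
  unfolding is_interval_1
proof (intro ballI allI impI)
  fix p q z assume "p \<in> window x" "q \<in> window x" "p \<le> z \<and> z \<le> q"
  then have "a < ereal (2 * p - x)" "ereal (2 * p - x) \<le> ereal (2 * z - x)"
    "ereal (2 * z - x) \<le> ereal (2 * q - x)" "ereal (2 * q - x) < b"
    by (auto simp: window_def)
  then have "a < ereal (2 * z - x)" "ereal (2 * z - x) < b"
    by (blast intro: less_le_trans le_less_trans)+
  then show "z \<in> window x"
    by (simp add: window_def)
qed

lemma is_interval_I: "is_interval I"
  unfolding is_interval_1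
proof (intro ballI allI impI)
  fix p q z assume "p \<in> I" "q \<in> I" "p \<le> z \<and> z \<le> q"
  then show "z \<in> I"
    unfolding I_def by (auto intro: order.trans[of a "ereal p"] order.trans[of _ "ereal q" b])
qed

lemma closed_I: "closed I"
  unfolding I_def support[symmetric] by (rule closed_closure)

lemma interior_in_I: "a < ereal \<xi> \<Longrightarrow> ereal \<xi> < b \<Longrightarrow> \<xi> \<in> I"
  by (simp add: I_def less_imp_le)

lemma window_in_interior:
  assumes "x \<in> I" "\<xi> \<in> window x"
  shows "a < ereal \<xi>" "ereal \<xi> < b"
proof -
  have "a \<le> ereal x" "ereal x \<le> b" "a < ereal (2 * \<xi> - x)" "ereal (2 * \<xi> - x) < b"
    using assms by (auto simp: I_def window_def)
  then show "a < ereal \<xi>" "ereal \<xi> < b"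
    using a_neq_PInf b_neq_MInf by (cases a; cases b; auto)+
qed

lemma window_contains_interval: "\<exists>p q. p < q \<and> {p..q} \<subseteq> window x"
proof -
  obtain r1 where r1: "a < ereal r1" "ereal r1 < b"
    using ereal_dense2[OF a_less_b] by auto
  obtain r2 where r2: "ereal r1 < ereal r2" "ereal r2 < b"
    using ereal_dense2[OF r1(2)] by auto
  have "{(r1 + x) / 2..(r2 + x) / 2} \<subseteq> window x"
  proof
    fix z assume "z \<in> {(r1 + x) / 2..(r2 + x) / 2}"
    then have "ereal r1 \<le> ereal (2 * z - x)" "ereal (2 * z - x) \<le> ereal r2"
      by auto
    with r1 r2 have "a < ereal (2 * z - x)" "ereal (2 * z - x) < b"
      by (blast intro: less_le_trans le_less_trans)+
    then show "z \<in> window x"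
      by (simp add: window_def)
  qed
  moreover have "(r1 + x) / 2 < (r2 + x) / 2"
    using r2 by simp
  ultimately show ?thesis
    by blast
qed

lemma measure_window_pos:
  assumes x: "x \<in> I"
  shows "0 < measure \<mu> (window x)"
proof -
  obtain p q where pq: "p < q" "{p..q} \<subseteq> window x"
    using window_contains_interval by blast
  have "emeasure \<mu> {p..q} \<noteq> 0"
    unfolding mu_eq
  proof (rule emeasure_density_interval_pos[OF phi_measurable \<open>p < q\<close>])
    fix \<xi> assume "p \<le> \<xi>" "\<xi> \<le> q"
    then have "\<xi> \<in> window x"
      using pq by auto
    then show "0 < \<phi> \<xi>"
      using window_in_interior[OF x] phi_pos by blast
  qed
  then have "0 < measure \<mu> {p..q}"
    by (simp add: emeasure_eq_measure zero_less_measure_iff)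
  also have "\<dots> \<le> measure \<mu> (window x)"
    using pq by (intro finite_measure_mono) auto
  finally show ?thesis .
qed

lemma cond_mean_window_mem: "x \<in> I \<Longrightarrow> cond_mean \<mu> (window x) \<in> window x"
  by (intro cond_mean_mem window_measurable is_interval_window measure_window_pos)

lemma cond_mean_window_in_I: "x \<in> I \<Longrightarrow> cond_mean \<mu> (window x) \<in> I"
  using cond_mean_window_mem window_in_interior interior_in_I by blast

lemma cond_mean_window_mono:
  assumes x: "x \<in> I" and y: "y \<in> I" and "x < y"
  shows "cond_mean \<mu> (window x) \<le> cond_mean \<mu> (window y)"
proof -
  have "cond_mean \<mu> (window x) \<le> cond_mean \<mu> (window x \<union> window y)"
  proof (rule cond_mean_le_Un[OF window_measurable window_measurable measure_window_pos[OF x]])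
    fix s t assume "s \<in> window x" "t \<in> window y - window x"
    then have "ereal (2 * s - x) < b" "a < ereal (2 * t - y)" "\<not> (a < ereal (2 * t - x) \<and> ereal (2 * t - x) < b)"
      by (auto simp: window_def)
    moreover have "ereal (2 * t - y) < ereal (2 * t - x)"
      using \<open>x < y\<close> by simp
    ultimately have "ereal (2 * s - x) < ereal (2 * t - x)"
      by (meson less_trans not_less le_less_trans)
    then show "s \<le> t"
      by simp
  qed
  also have "\<dots> = cond_mean \<mu> (window y \<union> window x)"
    by (simp add: Un_commute)
  also have "\<dots> \<le> cond_mean \<mu> (window y)"
  proof (rule cond_mean_Un_le[OF window_measurable window_measurable measure_window_pos[OF y]])
    fix s t assume "s \<in> window y" "t \<in> window x - window y"
    then have "a < ereal (2 * s - y)" "ereal (2 * t - x) < b" "\<not> (a < ereal (2 * t - y) \<and> ereal (2 * t - y) < b)"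
      by (auto simp: window_def)
    moreover have "ereal (2 * t - y) < ereal (2 * t - x)"
      using \<open>x < y\<close> by simp
    ultimately have "ereal (2 * t - y) < ereal (2 * s - y)"
      by (meson less_trans not_less less_le_trans)
    then show "t \<le> s"
      by simp
  qed
  finally show ?thesis .
qed

lemma integral_mu:
  fixes f :: "real \<Rightarrow> real"
  assumes [measurable]: "f \<in> borel_measurable borel"
  shows "(\<integral>\<xi>. f \<xi> \<partial>\<mu>) = (\<integral>\<xi>. \<phi> \<xi> * f \<xi> \<partial>lborel)"
  unfolding mu_eq by (subst integral_density) (auto simp: phi_nonneg)

lemma integrable_mu_iff:
  fixes f :: "real \<Rightarrow> real"
  assumes [measurable]: "f \<in> borel_measurable borel"
  shows "integrable \<mu> f \<longleftrightarrow> integrable lborel (\<lambda>\<xi>. \<phi> \<xi> * f \<xi>)"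
  unfolding mu_eq by (subst integrable_density) (auto simp: phi_nonneg)

lemma set_integral_mu:
  assumes [measurable]: "S \<in> sets borel"
  shows "(LINT \<xi>:S|\<mu>. \<xi> - c) = (\<integral>\<xi>. \<phi> \<xi> * (indicator S \<xi> * (\<xi> - c)) \<partial>lborel)"
    and "integrable lborel (\<lambda>\<xi>. \<phi> \<xi> * (indicator S \<xi> * (\<xi> - c)))"
proof -
  show "(LINT \<xi>:S|\<mu>. \<xi> - c) = (\<integral>\<xi>. \<phi> \<xi> * (indicator S \<xi> * (\<xi> - c)) \<partial>lborel)"
    unfolding set_lebesgue_integral_def by (simp add: integral_mu)
  have "set_integrable \<mu> S (\<lambda>\<xi>. \<xi> - c)"
    using set_integrable_id set_integrable_const_real by (intro set_integral_diff) auto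
  then show "integrable lborel (\<lambda>\<xi>. \<phi> \<xi> * (indicator S \<xi> * (\<xi> - c)))"
    unfolding set_integrable_def by (simp add: integrable_mu_iff)
qed

lemma window_translate:
  shows "(LINT \<xi>:window (x + 2 * t)|\<mu>. \<xi> - c) =
      (\<integral>u. \<phi> (u + t) * (indicator (window x) u * (u + t - c)) \<partial>lborel)"
    and "integrable lborel (\<lambda>u. \<phi> (u + t) * (indicator (window x) u * (u + t - c)))"
proof -
  have shift: "indicator (window (x + 2 * t)) (t + u) = (indicator (window x) u :: real)" for u
  proof -
    have "2 * (t + u) - (x + 2 * t) = 2 * u - x"
      by simp
    then have "t + u \<in> window (x + 2 * t) \<longleftrightarrow> u \<in> window x"
      unfolding window_def mem_Collect_eq by (simp only:)
    then show ?thesis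
      by (simp add: indicator_def)
  qed
  define F where "F = (\<lambda>\<xi>. \<phi> \<xi> * (indicator (window (x + 2 * t)) \<xi> * (\<xi> - c)))"
  have F_shift: "F (t + u) = \<phi> (u + t) * (indicator (window x) u * (u + t - c))" for u
    by (simp add: F_def shift add.commute)
  show "(LINT \<xi>:window (x + 2 * t)|\<mu>. \<xi> - c) =
      (\<integral>u. \<phi> (u + t) * (indicator (window x) u * (u + t - c)) \<partial>lborel)"
    using set_integral_mu(1)[OF window_measurable] lborel_integral_real_affine[of 1 F t]
    by (simp add: F_shift) (simp add: F_def)
  have "integrable lborel F"
    unfolding F_def by (rule set_integral_mu(2)[OF window_measurable])
  then show "integrable lborel (\<lambda>u. \<phi> (u + t) * (indicator (window x) u * (u + t - c)))"
    using lborel_integrable_real_affine_iff[of 1 F t] by (simp add: F_shift)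
qed

text \<open>Against the reference point \<open>m = cond_mean \<mu> (window x)\<close>, the monotone likelihood ratio
  of the log-concave density gives \<open>\<phi> m \<cdot> \<phi>(u + t) (u - m) \<le> \<phi>(m + t) \<cdot> \<phi> u (u - m)\<close>;
  integrating over \<open>u \<in> window x\<close>, the right-hand side vanishes by the choice of \<open>m\<close>.\<close>
lemma cond_mean_window_shift:
  assumes x: "x \<in> I" and y: "y \<in> I" and "x < y"
  shows "cond_mean \<mu> (window y) \<le> cond_mean \<mu> (window x) + (y - x) / 2"
proof -
  define t where "t = (y - x) / 2"
  define m where "m = cond_mean \<mu> (window x)"
  define h where "h u = indicator (window x) u * (u - m)" for u
  have t: "0 < t"
    using \<open>x < y\<close> by (simp add: t_def)
  have y_eq: "x + 2 * t = y"
    by (simp add: t_def field_simps)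
  have lhs: "measure \<mu> (window y) * (cond_mean \<mu> (window y) - (m + t)) =
      (\<integral>u. \<phi> (u + t) * h u \<partial>lborel)"
    using set_integral_id_minus_const[OF window_measurable measure_window_pos[OF y]]
      window_translate(1)[where x = x and t = t and c = "m + t"] by (simp add: y_eq h_def)
  have int_shift: "integrable lborel (\<lambda>u. \<phi> (u + t) * h u)"
    using window_translate(2)[where x = x and t = t and c = "m + t"] by (simp add: h_def)
  have int: "integrable lborel (\<lambda>u. \<phi> u * h u)"
    using set_integral_mu(2)[OF window_measurable] by (simp add: h_def)
  have centered: "(\<integral>u. \<phi> u * h u \<partial>lborel) = 0"
    using set_integral_id_minus_const[OF window_measurable measure_window_pos[OF x], of m]
      set_integral_mu(1)[OF window_measurable] by (simp add: h_def m_def)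
  have "\<phi> m * (\<integral>u. \<phi> (u + t) * h u \<partial>lborel) = (\<integral>u. \<phi> m * (\<phi> (u + t) * h u) \<partial>lborel)"
    by simp
  also have "\<dots> \<le> (\<integral>u. \<phi> (m + t) * (\<phi> u * h u) \<partial>lborel)"
  proof (rule integral_mono)
    fix u
    show "\<phi> m * (\<phi> (u + t) * h u) \<le> \<phi> (m + t) * (\<phi> u * h u)"
      using log_concave_shift_ratio_sign[OF log_concave t, of u m]
      by (simp add: h_def indicator_def algebra_simps)
  qed (use int int_shift in simp_all)
  also have "\<dots> = 0"
    by (simp add: centered)
  finally have "\<phi> m * (measure \<mu> (window y) * (cond_mean \<mu> (window y) - (m + t))) \<le> 0"
    by (simp add: lhs)
  moreover have "0 < \<phi> m"
    using cond_mean_window_mem[OF x] window_in_interior[OF x] phi_pos by (simp add: m_def)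
  ultimately have "cond_mean \<mu> (window y) - (m + t) \<le> 0"
    using measure_window_pos[OF y] by (simp add: mult_le_0_iff)
  then show ?thesis
    by (simp add: m_def t_def)
qed

lemma cond_mean_window_contraction:
  assumes "x \<in> I" "y \<in> I"
  shows "dist (cond_mean \<mu> (window x)) (cond_mean \<mu> (window y)) \<le> 1 / 2 * dist x y"
proof -
  have "\<bar>cond_mean \<mu> (window q) - cond_mean \<mu> (window p)\<bar> \<le> (q - p) / 2"
    if "p \<in> I" "q \<in> I" "p < q" for p q
    using cond_mean_window_mono[OF that] cond_mean_window_shift[OF that] unfolding abs_le_iff by linarith
  from this[of x y] this[of y x] assms show ?thesis
    by (cases x y rule: linorder_cases) (simp_all add: dist_real_def abs_minus_commute)
qed

lemma AE_mu_ereal_neq: "AE \<xi> in \<mu>. ereal \<xi> \<noteq> e"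
  by (cases e) (auto intro: eventually_mono[OF AE_mu_neq])

lemma Fext_eq: "Fext \<mu> y = measure \<mu> {\<xi>. ereal \<xi> \<le> y}"
  by (cases y) (auto simp: Fext_def measure_mu_UNIV atMost_def)

lemma Kext_eq: "Kext \<mu> y = (LINT \<xi>:{\<xi>. ereal \<xi> \<le> y}|\<mu>. \<xi>)"
  by (cases y) (auto simp: Kext_def set_lebesgue_integral_def atMost_def)

lemma Phi_eq_cond_mean: "Phi \<mu> a b x = cond_mean \<mu> (window x)"
proof -
  define c d where "c = (a + ereal x) / 2" and "d = (b + ereal x) / 2"
  have "c \<le> d"
    using a_less_b a_neq_PInf b_neq_MInf by (cases a; cases b) (auto simp: c_def d_def)
  have window: "window x = {\<xi>. c < ereal \<xi> \<and> ereal \<xi> < d}"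
    using window_eq[of x] by (simp add: c_def d_def add.commute)
  have "cond_mean \<mu> (window x) =
      ((LINT \<xi>:{\<xi>. ereal \<xi> \<le> d}|\<mu>. \<xi>) - (LINT \<xi>:{\<xi>. ereal \<xi> \<le> c}|\<mu>. \<xi>)) /
      (measure \<mu> {\<xi>. ereal \<xi> \<le> d} - measure \<mu> {\<xi>. ereal \<xi> \<le> c})"
  proof (rule cond_mean_eq_diff)
    show "{\<xi>. ereal \<xi> \<le> c} \<inter> window x = {}"
      unfolding window by auto
    show "AE \<xi> in \<mu>. \<xi> \<in> {\<xi>. ereal \<xi> \<le> d} \<longleftrightarrow> \<xi> \<in> {\<xi>. ereal \<xi> \<le> c} \<union> window x"
      using AE_mu_ereal_neq[of d] by eventually_elim (use \<open>c \<le> d\<close> in \<open>auto simp: window\<close>)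
  qed measurable
  then show ?thesis
    by (simp add: Phi_def Fext_eq Kext_eq c_def d_def)
qed

subsection \<open>Differentiability of \<open>calG\<close>\<close>

definition endpoint_dist :: "real \<Rightarrow> ereal" where
  "endpoint_dist \<xi> = min (sqd_end a \<xi>) (sqd_end b \<xi>)"

definition loss :: "real \<Rightarrow> real \<Rightarrow> real" where
  "loss x \<xi> = real_of_ereal (min (endpoint_dist \<xi>) (ereal ((\<xi> - x)\<^sup>2)))"

lemma calG_eq: "calG \<mu> a b x = (\<integral>\<xi>. loss x \<xi> \<partial>\<mu>)"
  by (simp add: calG_def loss_def endpoint_dist_def)

lemma endpoint_dist_nonneg: "0 \<le> endpoint_dist \<xi>"
  by (simp add: endpoint_dist_def sqd_end_def)

lemma window_closer:
  assumes "x \<in> I" "\<xi> \<in> window x"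
  shows "ereal ((\<xi> - x)\<^sup>2) \<le> endpoint_dist \<xi>"
proof -
  have h: "a \<le> ereal x" "ereal x \<le> b" "a < ereal (2 * \<xi> - x)" "ereal (2 * \<xi> - x) < b"
    using assms by (auto simp: I_def window_def)
  have "ereal ((\<xi> - x)\<^sup>2) \<le> sqd_end a \<xi>"
  proof (cases a)
    case (real r)
    with h have "0 \<le> (x - r) * (2 * \<xi> - x - r)"
      by (intro mult_nonneg_nonneg) auto
    with real show ?thesis
      by (simp add: sqd_end_def sq_dist_le_iff)
  qed (auto simp: sqd_end_def)
  moreover have "ereal ((\<xi> - x)\<^sup>2) \<le> sqd_end b \<xi>"
  proof (cases b)
    case (real r)
    with h have "0 \<le> (x - r) * (2 * \<xi> - x - r)"
      by (intro mult_nonpos_nonpos) auto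
    with real show ?thesis
      by (simp add: sqd_end_def sq_dist_le_iff)
  qed (auto simp: sqd_end_def)
  ultimately show ?thesis
    by (simp add: endpoint_dist_def)
qed

lemma endpoint_closer:
  assumes "x \<in> I" "\<xi> \<notin> window x"
  shows "endpoint_dist \<xi> \<le> ereal ((\<xi> - x)\<^sup>2)"
proof -
  have h: "a \<le> ereal x" "ereal x \<le> b"
    using assms(1) by (auto simp: I_def)
  from assms(2) consider "ereal (2 * \<xi> - x) \<le> a" | "b \<le> ereal (2 * \<xi> - x)"
    by (auto simp: window_def not_less)
  then show ?thesis
  proof cases
    case 1
    then obtain r where r: "a = ereal r"
      using a_neq_PInf by (cases a) auto
    with 1 h have "0 \<le> (r - x) * (2 * \<xi> - r - x)"
      by (intro mult_nonpos_nonpos) auto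
    then have "sqd_end a \<xi> \<le> ereal ((\<xi> - x)\<^sup>2)"
      by (simp add: r sqd_end_def sq_dist_le_iff)
    then show ?thesis
      by (simp add: endpoint_dist_def min.coboundedI1)
  next
    case 2
    then obtain r where r: "b = ereal r"
      using b_neq_MInf by (cases b) auto
    with 2 h have "0 \<le> (r - x) * (2 * \<xi> - r - x)"
      by (intro mult_nonneg_nonneg) auto
    then have "sqd_end b \<xi> \<le> ereal ((\<xi> - x)\<^sup>2)"
      by (simp add: r sqd_end_def sq_dist_le_iff)
    then show ?thesis
      by (simp add: endpoint_dist_def min.coboundedI2)
  qed
qed

lemma loss_nonneg: "0 \<le> loss x \<xi>"
  by (simp add: loss_def endpoint_dist_nonneg real_of_ereal_pos)

lemma loss_le: "loss x \<xi> \<le> (\<xi> - x)\<^sup>2"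
  using endpoint_dist_nonneg[of \<xi>] by (cases "endpoint_dist \<xi>") (auto simp: loss_def min_def)

lemma loss_window: "x \<in> I \<Longrightarrow> \<xi> \<in> window x \<Longrightarrow> loss x \<xi> = (\<xi> - x)\<^sup>2"
  using window_closer by (simp add: loss_def min_absorb2)

lemma loss_outside:
  assumes "x \<in> I" "\<xi> \<notin> window x"
  shows "loss y \<xi> \<le> loss x \<xi>"
  using endpoint_closer[OF assms] endpoint_dist_nonneg[of \<xi>]
  by (cases "endpoint_dist \<xi>") (auto simp: loss_def min_def)

lemma loss_measurable [measurable]: "(\<lambda>\<xi>. loss x \<xi>) \<in> borel_measurable borel"
  unfolding loss_def endpoint_dist_def sqd_end_def by measurable

lemma integrable_loss: "integrable \<mu> (\<lambda>\<xi>. loss x \<xi>)"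
  by (rule Bochner_Integration.integrable_bound[OF integrable_sq_shift[of x]])
    (auto intro!: AE_I2 simp: loss_nonneg loss_le)

lemma set_integrable_window_deriv: "set_integrable \<mu> (window x) (\<lambda>\<xi>. 2 * (y - \<xi>))"
  using set_integrable_const_real set_integrable_id
  by (intro set_integrable_mult_right set_integral_diff(1)) auto

text \<open>Inside the window \<open>loss\<close> is the parabola \<open>(\<xi> - x)\<^sup>2\<close>; outside it, moving \<open>x\<close>
  cannot increase \<open>loss\<close>.\<close>
lemma loss_diff_le:
  assumes x: "x \<in> I"
  shows "loss y \<xi> - loss x \<xi> \<le> indicator (window x) \<xi> * ((y - x) * (2 * (x - \<xi>)) + (y - x)\<^sup>2)"
proof (cases "\<xi> \<in> window x")
  case True
  have "loss y \<xi> - loss x \<xi> \<le> (\<xi> - y)\<^sup>2 - (\<xi> - x)\<^sup>2"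
    using loss_le[of y \<xi>] loss_window[OF x True] by simp
  also have "\<dots> = (y - x) * (2 * (x - \<xi>)) + (y - x)\<^sup>2"
    by (simp add: power2_eq_square algebra_simps)
  finally show ?thesis
    using True by simp
next
  case False
  then show ?thesis
    using loss_outside[OF x False, of y] by simp
qed

lemma calG_quadratic_bound:
  assumes x: "x \<in> I"
  shows "calG \<mu> a b y - calG \<mu> a b x \<le>
    (y - x) * (LINT \<xi>:window x|\<mu>. 2 * (x - \<xi>)) + (y - x)\<^sup>2"
proof -
  have int: "set_integrable \<mu> (window x) (\<lambda>\<xi>. (y - x) * (2 * (x - \<xi>)) + (y - x)\<^sup>2)"
    using set_integrable_mult_right[OF set_integrable_window_deriv] set_integrable_const_real
    by (intro set_integral_add(1)) auto
  have "calG \<mu> a b y - calG \<mu> a b x = (\<integral>\<xi>. loss y \<xi> - loss x \<xi> \<partial>\<mu>)"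
    using integrable_loss by (simp add: calG_eq)
  also have "\<dots> \<le> (LINT \<xi>:window x|\<mu>. (y - x) * (2 * (x - \<xi>)) + (y - x)\<^sup>2)"
    unfolding set_lebesgue_integral_def
    using integrable_loss int loss_diff_le[OF x] by (intro integral_mono) (auto simp: set_integrable_def)
  also have "\<dots> = (y - x) * (LINT \<xi>:window x|\<mu>. 2 * (x - \<xi>)) + (y - x)\<^sup>2 * measure \<mu> (window x)"
    using set_integrable_window_deriv[of x x] set_integrable_const_real[of "window x" "(y - x)\<^sup>2"]
    by (simp add: set_integral_const_real mult.commute)
  also have "\<dots> \<le> (y - x) * (LINT \<xi>:window x|\<mu>. 2 * (x - \<xi>)) + (y - x)\<^sup>2"
    using bounded_measure[of "window x"] measure_mu_UNIV by (simp add: mult_left_le)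
  finally show ?thesis .
qed

lemma eventually_mem_window_iff:
  assumes X: "X \<longlonglongrightarrow> x" and na: "ereal (2 * \<xi> - x) \<noteq> a" and nb: "ereal (2 * \<xi> - x) \<noteq> b"
  shows "eventually (\<lambda>n. \<xi> \<in> window (X n) \<longleftrightarrow> \<xi> \<in> window x) sequentially"
proof -
  define e where "e = ereal (2 * \<xi> - x)"
  have Y: "(\<lambda>n. ereal (2 * \<xi> - X n)) \<longlonglongrightarrow> e"
    unfolding e_def by (intro tendsto_intros X)
  have "eventually (\<lambda>n. a < ereal (2 * \<xi> - X n) \<longleftrightarrow> a < e) sequentially"
  proof (cases "a < e")
    case True
    then show ?thesis
      using order_tendstoD(1)[OF Y True] by (auto elim: eventually_mono)
  next
    case False
    then have "e < a"
      using na by (auto simp: e_def)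
    from order_tendstoD(2)[OF Y this] show ?thesis
      using False by (auto elim: eventually_mono)
  qed
  moreover have "eventually (\<lambda>n. ereal (2 * \<xi> - X n) < b \<longleftrightarrow> e < b) sequentially"
  proof (cases "e < b")
    case True
    then show ?thesis
      using order_tendstoD(2)[OF Y True] by (auto elim: eventually_mono)
  next
    case False
    then have "b < e"
      using nb by (auto simp: e_def)
    from order_tendstoD(1)[OF Y this] show ?thesis
      using False by (auto elim: eventually_mono)
  qed
  ultimately show ?thesis
    by eventually_elim (simp add: window_def e_def)
qed

lemma window_integral_tendsto:
  fixes g :: "real \<Rightarrow> real"
  assumes g: "integrable \<mu> g"
  shows "((\<lambda>y. LINT \<xi>:window y|\<mu>. g \<xi>) \<longlongrightarrow> (LINT \<xi>:window x|\<mu>. g \<xi>)) (at x within S)"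
  unfolding tendsto_at_iff_sequentially comp_def set_lebesgue_integral_def
proof (intro allI impI)
  fix X assume X: "X \<longlonglongrightarrow> x"
  show "(\<lambda>n. \<integral>\<xi>. indicator (window (X n)) \<xi> *\<^sub>R g \<xi> \<partial>\<mu>) \<longlonglongrightarrow> (\<integral>\<xi>. indicator (window x) \<xi> *\<^sub>R g \<xi> \<partial>\<mu>)"
  proof (rule integral_dominated_convergence[where w="\<lambda>\<xi>. norm (g \<xi>)"])
    have "AE \<xi> in \<mu>. ereal (2 * \<xi> - x) \<noteq> a \<and> ereal (2 * \<xi> - x) \<noteq> b"
      using AE_mu_ereal_neq[of "(a + ereal x) / 2"] AE_mu_ereal_neq[of "(b + ereal x) / 2"]
      by eventually_elim (use a_neq_PInf b_neq_MInf in \<open>cases a; cases b; auto simp: field_simps\<close>)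
    then show "AE \<xi> in \<mu>. (\<lambda>n. indicator (window (X n)) \<xi> *\<^sub>R g \<xi>) \<longlonglongrightarrow> indicator (window x) \<xi> *\<^sub>R g \<xi>"
    proof eventually_elim
      case (elim \<xi>)
      then have "eventually (\<lambda>n. \<xi> \<in> window (X n) \<longleftrightarrow> \<xi> \<in> window x) sequentially"
        by (intro eventually_mem_window_iff[OF X]) auto
      then have "eventually (\<lambda>n. indicator (window (X n)) \<xi> *\<^sub>R g \<xi> = indicator (window x) \<xi> *\<^sub>R g \<xi>) sequentially"
        by (rule eventually_mono) (simp add: indicator_def)
      then show ?case
        by (rule tendsto_eventually)
    qed
  qed (use g borel_measurable_integrable[OF g] in \<open>auto intro!: AE_I2 simp: indicator_def\<close>)
qed

lemma window_deriv_tendsto: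
  "((\<lambda>y. LINT \<xi>:window y|\<mu>. 2 * (y - \<xi>)) \<longlongrightarrow> (LINT \<xi>:window x|\<mu>. 2 * (x - \<xi>))) (at x within S)"
proof -
  have split: "(LINT \<xi>:window y|\<mu>. 2 * (y - \<xi>)) =
      2 * (y * (LINT \<xi>:window y|\<mu>. 1) - (LINT \<xi>:window y|\<mu>. \<xi>))" for y
    using set_integrable_const_real[of "window y" y] set_integrable_id[of "window y"]
    by (simp add: set_integral_const_real)
  show ?thesis
    unfolding split
    by (intro tendsto_intros window_integral_tendsto integrable_id integrable_const)
qed

lemma calG_has_derivative:
  assumes "x \<in> I"
  shows "(calG \<mu> a b has_real_derivative (LINT \<xi>:window x|\<mu>. 2 * (x - \<xi>))) (at x within I)"
  using calG_quadratic_bound window_deriv_tendsto assms by (rule has_real_derivative_if_quadratic_bound)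

lemma window_deriv_eq:
  assumes "x \<in> I"
  shows "(LINT \<xi>:window x|\<mu>. 2 * (x - \<xi>)) = 2 * measure \<mu> (window x) * (x - cond_mean \<mu> (window x))"
proof -
  have "(LINT \<xi>:window x|\<mu>. 2 * (x - \<xi>)) = (LINT \<xi>:window x|\<mu>. (-2) * (\<xi> - x))"
    by (rule set_lebesgue_integral_cong) auto
  also have "\<dots> = -2 * (measure \<mu> (window x) * (cond_mean \<mu> (window x) - x))"
    by (simp only: set_integral_mult_right set_integral_id_minus_const[OF window_measurable measure_window_pos[OF assms]])
  finally show ?thesis
    by (simp add: algebra_simps)
qed

subsection \<open>The minimiser of \<open>calG\<close>\<close>

lemma Phi_in_I: "x \<in> I \<Longrightarrow> Phi \<mu> a b x \<in> I"
  by (simp add: Phi_eq_cond_mean cond_mean_window_in_I)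

lemma Phi_contraction: "x \<in> I \<Longrightarrow> y \<in> I \<Longrightarrow> dist (Phi \<mu> a b x) (Phi \<mu> a b y) \<le> 1 / 2 * dist x y"
  unfolding Phi_eq_cond_mean by (rule cond_mean_window_contraction)

lemma I_nonempty: "I \<noteq> {}"
  using ereal_dense2[OF a_less_b] interior_in_I by blast

lemma Phi_fixpoint: "\<exists>!x\<in>I. Phi \<mu> a b x = x"
  by (rule Banach_fix[where c="1 / 2"])
    (use closed_I I_nonempty Phi_in_I Phi_contraction in \<open>auto simp: complete_eq_closed\<close>)

lemma at_within_I_nontrivial:
  assumes "y \<in> I"
  shows "at y within I \<noteq> bot"
proof -
  obtain r1 where r1: "a < ereal r1" "ereal r1 < b"
    using ereal_dense2[OF a_less_b] by auto
  obtain r2 where r2: "ereal r1 < ereal r2" "ereal r2 < b"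
    using ereal_dense2[OF r1(2)] by auto
  have "a < ereal r2"
    using r1(1) r2(1) by (rule order.strict_trans)
  then have "r1 \<in> I" "r2 \<in> I" "r1 \<noteq> r2"
    using r1 r2 by (auto intro!: interior_in_I)
  then obtain z where "z \<in> I" "z \<noteq> y"
    by metis
  then have "y islimpt I"
    using islimpt_is_interval[OF is_interval_I assms] by blast
  then show ?thesis
    by (simp add: trivial_limit_within)
qed

text \<open>The derivative of \<open>calG\<close> at \<open>x\<close> is \<open>2 \<mu>(window x) (x - Phi x)\<close>, and \<open>x - Phi x\<close> is
  strictly increasing because \<open>Phi\<close> is a \<open>1/2\<close>-contraction; so the derivative changes sign
  exactly at the fixed point.\<close>
lemma window_deriv_sign:
  assumes x: "x \<in> I" and xs: "xs \<in> I" "Phi \<mu> a b xs = xs"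
  shows "x < xs \<Longrightarrow> (LINT \<xi>:window x|\<mu>. 2 * (x - \<xi>)) < 0"
    and "xs < x \<Longrightarrow> 0 < (LINT \<xi>:window x|\<mu>. 2 * (x - \<xi>))"
proof -
  have deriv: "(LINT \<xi>:window x|\<mu>. 2 * (x - \<xi>)) = 2 * measure \<mu> (window x) * (x - Phi \<mu> a b x)"
    using window_deriv_eq[OF x] by (simp add: Phi_eq_cond_mean)
  have pos: "0 < 2 * measure \<mu> (window x)"
    using measure_window_pos[OF x] by simp
  have "dist (Phi \<mu> a b x) xs \<le> 1 / 2 * dist x xs"
    using Phi_contraction[OF x xs(1)] xs(2) by simp
  then have close: "\<bar>Phi \<mu> a b x - xs\<bar> \<le> \<bar>x - xs\<bar> / 2"
    by (simp add: dist_real_def)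
  have "x - Phi \<mu> a b x < 0" if "x < xs"
    using abs_le_D2[OF close] that by (simp add: abs_of_neg)
  moreover have "0 < x - Phi \<mu> a b x" if "xs < x"
    using abs_le_D1[OF close] that by (simp add: abs_of_pos)
  ultimately have "x < xs \<Longrightarrow> x - Phi \<mu> a b x < 0" and "xs < x \<Longrightarrow> 0 < x - Phi \<mu> a b x"
    by blast+
  then show "x < xs \<Longrightarrow> (LINT \<xi>:window x|\<mu>. 2 * (x - \<xi>)) < 0"
    and "xs < x \<Longrightarrow> 0 < (LINT \<xi>:window x|\<mu>. 2 * (x - \<xi>))"
    unfolding deriv using pos by (simp_all add: mult_pos_neg)
qed

lemma calG_argmin:
  assumes xs: "xs \<in> I" "Phi \<mu> a b xs = xs"
  shows "{y\<in>I. \<forall>z\<in>I. calG \<mu> a b y \<le> calG \<mu> a b z} = {xs}"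
proof -
  have "calG \<mu> a b xs < calG \<mu> a b y" if "y \<in> I" "y \<noteq> xs" for y
    using is_interval_I xs(1) calG_has_derivative window_deriv_sign[OF _ xs] that
    by (rule strict_min_if_deriv_sign)
  with xs(1) show ?thesis
    by (force simp: less_imp_le not_less)
qed

lemma calG_stationary:
  assumes xs: "xs \<in> I" "Phi \<mu> a b xs = xs"
  shows "{y\<in>I. (calG \<mu> a b has_real_derivative 0) (at y within I)} = {xs}"
proof -
  have "(LINT \<xi>:window xs|\<mu>. 2 * (xs - \<xi>)) = 0"
    using window_deriv_eq[OF xs(1)] xs(2) by (simp add: Phi_eq_cond_mean)
  then have "(calG \<mu> a b has_real_derivative 0) (at xs within I)"
    using calG_has_derivative[OF xs(1)] by simp
  moreover have "y = xs" if y: "y \<in> I" "(calG \<mu> a b has_real_derivative 0) (at y within I)" for y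
  proof -
    have "(LINT \<xi>:window y|\<mu>. 2 * (y - \<xi>)) = 0"
      using has_field_derivative_unique[OF calG_has_derivative y(2) at_within_I_nontrivial] y(1)
      by simp
    with window_deriv_sign[OF y(1) xs] show "y = xs"
      by (cases y xs rule: linorder_cases) auto
  qed
  ultimately show ?thesis
    using xs(1) by blast
qed

lemma Phi_iterates_tendsto:
  assumes "xs \<in> I" "Phi \<mu> a b xs = xs" "x0 \<in> I"
  shows "(\<lambda>n. (Phi \<mu> a b ^^ n) x0) \<longlonglongrightarrow> xs"
  using _ _ _ Phi_contraction assms
  by (rule contraction_iterates_tendsto) (auto simp: image_subset_iff Phi_in_I)

lemma calG_argmin_Phi_fixpoint:
  "(\<forall>x\<in>I. (calG \<mu> a b has_real_derivative
       (LINT \<xi>:{\<xi>. (a + ereal x) / 2 < ereal \<xi> \<and> ereal \<xi> < (ereal x + b) / 2}|\<mu>. 2 * (x - \<xi>)))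
       (at x within I)) \<and>
   (\<exists>xs\<in>I.
      {y\<in>I. \<forall>z\<in>I. calG \<mu> a b y \<le> calG \<mu> a b z} = {xs} \<and>
      {y\<in>I. (calG \<mu> a b has_real_derivative 0) (at y within I)} = {xs} \<and>
      xs = Phi \<mu> a b xs \<and>
      (\<forall>x0\<in>I. (\<lambda>n. (Phi \<mu> a b ^^ n) x0) \<longlonglongrightarrow> xs))"
proof -
  obtain xs where xs: "xs \<in> I" "Phi \<mu> a b xs = xs"
    using Phi_fixpoint by blast
  show ?thesis
    unfolding window_eq
  proof (intro conjI ballI bexI[of _ xs])
    show "(calG \<mu> a b has_real_derivative (LINT \<xi>:window x|\<mu>. 2 * (x - \<xi>))) (at x within I)"
      if "x \<in> I" for x
      using that by (rule calG_has_derivative)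
  qed (use xs calG_argmin[OF xs] calG_stationary[OF xs] Phi_iterates_tendsto[OF xs] in simp_all)
qed

end

theorem propositionA1:
  fixes \<mu> :: "real measure" and \<phi> :: "real \<Rightarrow> real" and a b :: ereal
  assumes phi_meas: "\<phi> \<in> borel_measurable borel"
    and lc: "log_concave \<phi>"
    and mu_def: "\<mu> = density lborel (\<lambda>x. ennreal (\<phi> x))"
    and prob: "emeasure \<mu> (space \<mu>) = 1"
    and second_moment: "integrable \<mu> (\<lambda>x. x\<^sup>2)"
    and I_def: "closure {x. \<phi> x > 0} = {x. a \<le> ereal x \<and> ereal x \<le> b}"
    and ab: "a < b"
  defines "I \<equiv> {x. a \<le> ereal x \<and> ereal x \<le> b}"
  shows
    "(\<forall>x\<in>I. (calG \<mu> a b has_real_derivative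
         (LINT \<xi>:{\<xi>. (a + ereal x) / 2 < ereal \<xi> \<and> ereal \<xi> < (ereal x + b) / 2}|\<mu>. 2 * (x - \<xi>)))
         (at x within I)) \<and>
     (\<exists>xs\<in>I.
        {y\<in>I. \<forall>z\<in>I. calG \<mu> a b y \<le> calG \<mu> a b z} = {xs} \<and>
        {y\<in>I. (calG \<mu> a b has_real_derivative 0) (at y within I)} = {xs} \<and>
        xs = Phi \<mu> a b xs \<and>
        (\<forall>x0\<in>I. (\<lambda>n. (Phi \<mu> a b ^^ n) x0) \<longlonglongrightarrow> xs))"
proof -
  have setting: "log_concave_density \<mu> \<phi> a b"
    by unfold_locales fact+
  have "log_concave_density.I a b = I"
    using assms by (simp add: log_concave_density.I_def[OF setting])
  with log_concave_density.calG_argmin_Phi_fixpoint[OF setting] show ?thesis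
    by simp
qed

end
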